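(* Let $T$ be a real-valued random variable with law $\mathrm{P}_0$, let $T^*$ be an independent copy, and let $Q = \tfrac{1}{2}\mathrm{P}_0(T^* \geq T\mid T)+\tfrac{1}{2}\mathrm{P}_0(T^* > T\mid T)$ be the mid-p-value, considered under $T\sim \mathrm{P}_0$. Let $F_Q$ be the distribution function of $Q$ and $S_Q$ the (closed) support of $Q$. Then for every $x \in S_Q$, $$F_Q(x) = \sup\{F_W(x): F_W \text{ is a sub-uniform distribution function and } F_W(y) = F_Q(y) \text{ for all } y\in S_Q\cap [0,x)\},$$ where the requirement $F_W = F_Q$ on $S_Q\cap[0,x)$ is dropped when $S_Q\cap [0,x)$ is empty.
   Context: A random variable $W$ (and its law and distribution function) is called sub-uniform if $W$ is dominated by a uniform random variable $U$ on $[0,1]$ in the convex order, i.e. $\mathrm{E}\{h(W)\}\le \mathrm{E}\{h(U)\}$ for every convex $h:\mathbb{R}\to\mathbb{R}$ for which the expectations exist. *)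

theory Defs
  imports "HOL-Probability.Probability"
begin

definition unif01 :: "real measure" where
  "unif01 = uniform_measure lborel {0..1}"

text \<open>A (Borel probability) law on the reals is sub-uniform if it is dominated by the
  uniform law on [0,1] in the convex order: for every convex h the expectation under the
  law exists and does not exceed the expectation under the uniform law. (Under the
  extended-valued reading, E h(W) = +infinity would violate the inequality, so
  integrability is part of the requirement.)\<close>
definition sub_uniform :: "real measure \<Rightarrow> bool" where
  "sub_uniform W \<longleftrightarrow> prob_space W \<and> sets W = sets borel \<and>
     (\<forall>h::real \<Rightarrow> real. convex_on UNIV h \<longrightarrow>
        integrable W h \<and> integral\<^sup>L W h \<le> integral\<^sup>L unif01 h)"

text \<open>Mid-p-value as function of the observed value t, where T* ~ P0 is independent of T:
  Q(t) = 1/2 P0(T* >= t) + 1/2 P0(T* > t).\<close>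
definition midp :: "real measure \<Rightarrow> real \<Rightarrow> real" where
  "midp P0 t = 1/2 * measure P0 {t..} + 1/2 * measure P0 {t<..}"

definition supp :: "real measure \<Rightarrow> real set" where
  "supp M = {x. \<forall>e>0. 0 < measure M {x - e<..<x + e}}"

end

theory Submission
  imports Defs
begin

text \<open>Let G be the cdf of -T and I its quantile function, so that for \<omega> uniform on (0,1)
  the value I \<omega> has the law of -T and the mid-p-value is distributed as the midpoint of the jump
  interval [G(I \<omega>-), G(I \<omega>)] that contains \<omega>. Reflecting \<omega> inside its jump interval
  preserves the uniform law, so Q is the average of two uniform variables and is sub-uniform by
  Jensen's inequality; thus F_Q itself is admissible and it remains to show F_W(x) \<le> F_Q(x).
  Agreement on the support below x forces F_Q \<le> F_W below x, hence E(x - Q)^+ \<le> E(x - W)^+.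
  If no jump interval contains x in its interior, E(x - Q)^+ = E(x - U)^+ and comparing the
  convex functions (c - w)^+ for c \<down> x gives F_W(x) \<le> x \<le> F_Q(x). Otherwise x, being in
  the support, is the midpoint of a jump interval (\<alpha>, \<beta>) on whose upper half Q has no mass,
  and the same comparison at the kink \<beta> gives the bound.\<close>

abbreviation lborel01 :: "real measure" where
  "lborel01 \<equiv> restrict_space lborel {0<..<1}"

lemma prob_space_lborel01: "prob_space lborel01"
  by (auto simp add: emeasure_restrict_space space_restrict_space intro!: prob_spaceI)

lemma space_lborel01 [simp]: "space lborel01 = {0<..<1}"
  by (simp add: space_restrict_space)

lemma sets_lborel01: "sets lborel01 = sets (restrict_space borel {0<..<1})"
  by (rule sets_restrict_space_cong) simp

lemma measure_lborel01: "A \<subseteq> {0<..<1} \<Longrightarrow> measure lborel01 A = measure lborel A"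
  by (rule measure_restrict_space) auto

lemma measurable_ident_lborel01 [measurable]: "(\<lambda>x::real. x) \<in> borel_measurable lborel01"
  by (subst measurable_cong_sets[OF sets_lborel01 refl]) (rule measurable_restrict_space1, simp)

lemma Collect_le_in_sets_lborel01:
  fixes f :: "real \<Rightarrow> real"
  assumes "f \<in> borel_measurable lborel01"
  shows "{\<omega>\<in>{0<..<1}. f \<omega> \<le> s} \<in> sets lborel01"
proof -
  have "f -` {..s} \<inter> space lborel01 \<in> sets lborel01"
    by (rule measurable_sets[OF assms]) simp
  moreover have "f -` {..s} \<inter> space lborel01 = {\<omega>\<in>{0<..<1}. f \<omega> \<le> s}"
    by auto
  ultimately show ?thesis by simp
qed

lemma Collect_le_in_sets_lborel:
  fixes f :: "real \<Rightarrow> real"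
  assumes "f \<in> borel_measurable lborel01"
  shows "{\<omega>\<in>{0<..<1}. f \<omega> \<le> s} \<in> sets lborel"
  using Collect_le_in_sets_lborel01[OF assms] by (subst (asm) sets_restrict_space_iff) auto

lemma cdf_distr_lborel01:
  fixes f :: "real \<Rightarrow> real"
  assumes f: "f \<in> borel_measurable lborel01"
  shows "cdf (distr lborel01 borel f) s = measure lborel {\<omega>\<in>{0<..<1}. f \<omega> \<le> s}"
proof -
  have "cdf (distr lborel01 borel f) s = measure lborel01 (f -` {..s} \<inter> space lborel01)"
    unfolding cdf_def by (rule measure_distr[OF f]) simp
  also have "f -` {..s} \<inter> space lborel01 = {\<omega>\<in>{0<..<1}. f \<omega> \<le> s}"
    by auto
  also have "measure lborel01 \<dots> = measure lborel {\<omega>\<in>{0<..<1}. f \<omega> \<le> s}"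
    by (rule measure_lborel01) auto
  finally show ?thesis .
qed

lemma real_distribution_distr_lborel01:
  fixes f :: "real \<Rightarrow> real"
  assumes "f \<in> borel_measurable lborel01"
  shows "real_distribution (distr lborel01 borel f)"
proof -
  interpret prob_space lborel01 by (rule prob_space_lborel01)
  show ?thesis using assms by simp
qed

lemma integrable_lborel01_bounded:
  fixes g :: "real \<Rightarrow> real"
  assumes "g \<in> borel_measurable lborel01" and "\<And>\<omega>. \<omega> \<in> {0<..<1} \<Longrightarrow> \<bar>g \<omega>\<bar> \<le> B"
  shows "integrable lborel01 g"
proof -
  interpret prob_space lborel01 by (rule prob_space_lborel01)
  show ?thesis by (rule integrable_const_bound[where B=B]) (auto intro!: AE_I2 assms)
qed

lemma unif01_eq_distr_lborel01: "unif01 = distr lborel01 borel (\<lambda>x. x)"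
proof (rule cdf_unique)
  have "emeasure lborel {0..1::real} = 1" by simp
  then show "real_distribution unif01"
    unfolding unif01_def real_distribution_def real_distribution_axioms_def
    using prob_space_uniform_measure[of lborel "{0..1::real}"] by simp
  show "real_distribution (distr lborel01 borel (\<lambda>x. x))"
    by (rule real_distribution_distr_lborel01) simp
  show "cdf unif01 = cdf (distr lborel01 borel (\<lambda>x. x))"
  proof
    fix s :: real
    have "cdf unif01 s = measure lborel ({0..1} \<inter> {..s})"
      unfolding unif01_def cdf_def by simp
    also have "\<dots> = measure lborel {\<omega>\<in>{0<..<1}. \<omega> \<le> s}"
    proof -
      consider "s < 0" | "0 \<le> s" "s < 1" | "1 \<le> s" by linarith
      then show ?thesis
      proof cases
        case 1
        then have "{0..1} \<inter> {..s} = {}" "{\<omega>\<in>{0<..<1::real}. \<omega> \<le> s} = {}" by auto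
        then show ?thesis by (simp only:)
      next
        case 2
        then have "{0..1} \<inter> {..s} = {0..s}" "{\<omega>\<in>{0<..<1::real}. \<omega> \<le> s} = {0<..s}" by auto
        then show ?thesis using 2 by simp
      next
        case 3
        then have "{0..1} \<inter> {..s} = {0..1}" "{\<omega>\<in>{0<..<1::real}. \<omega> \<le> s} = {0<..<1}" by auto
        then show ?thesis by simp
      qed
    qed
    also have "\<dots> = cdf (distr lborel01 borel (\<lambda>x. x)) s"
      by (rule cdf_distr_lborel01[symmetric]) simp
    finally show "cdf unif01 s = cdf (distr lborel01 borel (\<lambda>x. x)) s" .
  qed
qed

lemma integral_unif01:
  fixes g :: "real \<Rightarrow> real"
  assumes "g \<in> borel_measurable borel"
  shows "integral\<^sup>L unif01 g = integral\<^sup>L lborel01 g"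
  unfolding unif01_eq_distr_lborel01 by (subst integral_distr) (simp_all add: assms)

lemma convex_on_bounded_on_compact:
  fixes h :: "real \<Rightarrow> real"
  assumes "convex_on UNIV h" and "compact K"
  obtains B where "\<And>y. y \<in> K \<Longrightarrow> \<bar>h y\<bar> \<le> B"
proof -
  have "continuous_on UNIV h" by (rule convex_on_continuous[OF _ assms(1)]) simp
  then have "compact (h ` K)"
    by (intro compact_continuous_image[OF continuous_on_subset] assms(2)) auto
  then obtain B where "\<forall>z\<in>h ` K. norm z \<le> B"
    using compact_imp_bounded bounded_iff by metis
  then show ?thesis using that by auto
qed

lemma convex_on_borel_measurable:
  fixes h :: "real \<Rightarrow> real"
  assumes "convex_on UNIV h"
  shows "h \<in> borel_measurable borel"
  by (rule borel_measurable_continuous_onI, rule convex_on_continuous[OF _ assms]) simp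

abbreviation ramp :: "real \<Rightarrow> real \<Rightarrow> real" where
  "ramp c y \<equiv> max (c - y) 0"

lemma convex_on_ramp: "convex_on UNIV (ramp c)"
proof (rule convex_onI)
  fix t x y :: real assume t: "0 < t" "t < 1"
  have "(1 - t) * (c - x) \<le> (1 - t) * ramp c x" "t * (c - y) \<le> t * ramp c y"
    using t by (simp_all add: mult_left_mono)
  moreover have "0 \<le> (1 - t) * ramp c x" "0 \<le> t * ramp c y"
    using t by auto
  moreover have "c - ((1 - t) * x + t * y) = (1 - t) * (c - x) + t * (c - y)"
    by (simp add: algebra_simps)
  ultimately show "ramp c ((1 - t) *\<^sub>R x + t *\<^sub>R y) \<le> (1 - t) * ramp c x + t * ramp c y"
    by simp
qed simp

lemma integrable_lborel01_ramp: "integrable lborel01 (ramp c)"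
  by (rule integrable_lborel01_bounded[where B="\<bar>c\<bar> + 1"]) auto

lemma sub_uniform_real_distribution: "sub_uniform W \<Longrightarrow> real_distribution W"
  unfolding sub_uniform_def real_distribution_def real_distribution_axioms_def by simp

lemma sub_uniform_ramp:
  assumes "sub_uniform W"
  shows "integrable W (ramp c)" and "integral\<^sup>L W (ramp c) \<le> integral\<^sup>L lborel01 (ramp c)"
proof -
  have "integrable W (ramp c) \<and> integral\<^sup>L W (ramp c) \<le> integral\<^sup>L unif01 (ramp c)"
    using assms convex_on_ramp[of c] unfolding sub_uniform_def by blast
  then show "integrable W (ramp c)" "integral\<^sup>L W (ramp c) \<le> integral\<^sup>L lborel01 (ramp c)"
    by (simp_all add: integral_unif01)
qed

lemma integral_ramp_add_cdf_le:
  assumes W: "real_distribution W" and "integrable W (ramp x)" "integrable W (ramp c)" and "x < c"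
  shows "integral\<^sup>L W (ramp x) + (c - x) * cdf W x \<le> integral\<^sup>L W (ramp c)"
proof -
  interpret real_distribution W by (rule W)
  have ind: "integrable W (indicator {..x} :: real \<Rightarrow> real)"
    by (rule integrable_real_indicator) (simp_all add: less_top[symmetric] emeasure_finite)
  have "integral\<^sup>L W (ramp x) + (c - x) * cdf W x
      = integral\<^sup>L W (\<lambda>y. ramp x y + (c - x) * indicator {..x} y)"
    using assms ind by (simp add: cdf_def)
  also have "\<dots> \<le> integral\<^sup>L W (ramp c)"
  proof (rule integral_mono)
    fix y show "ramp x y + (c - x) * indicator {..x} y \<le> ramp c y"
      using \<open>x < c\<close> by (cases "y \<le> x") (auto simp: indicator_def)
  qed (use assms ind in simp_all)
  finally show ?thesis .
qed

lemma integral_ramp_lborel01_diff_le: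
  assumes "0 \<le> x" "x < c" "c < 1"
  shows "integral\<^sup>L lborel01 (ramp c) - integral\<^sup>L lborel01 (ramp x) \<le> (c - x) * c"
proof -
  interpret prob_space lborel01 by (rule prob_space_lborel01)
  have Ioc: "{0<..c} \<in> sets lborel01"
    using assms by (subst sets_restrict_space_iff) auto
  have "integral\<^sup>L lborel01 (ramp c) - integral\<^sup>L lborel01 (ramp x)
      = integral\<^sup>L lborel01 (\<lambda>\<omega>. ramp c \<omega> - ramp x \<omega>)"
    using integrable_lborel01_ramp by simp
  also have "\<dots> \<le> integral\<^sup>L lborel01 (\<lambda>\<omega>. (c - x) * indicator {0<..c} \<omega>)"
  proof (rule integral_mono)
    show "integrable lborel01 (\<lambda>\<omega>. (c - x) * indicator {0<..c} \<omega>)"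
      using Ioc by (intro integrable_mult_right integrable_real_indicator)
        (simp_all add: less_top[symmetric] emeasure_finite)
    fix \<omega> assume "\<omega> \<in> space lborel01"
    then show "ramp c \<omega> - ramp x \<omega> \<le> (c - x) * indicator {0<..c} \<omega>"
      using assms by (cases "\<omega> \<le> c") (auto simp: indicator_def max_def)
  qed (use integrable_lborel01_ramp in simp)
  also have "\<dots> = (c - x) * measure lborel01 {0<..c}"
  proof -
    have "{0<..c} \<inter> {0<..<1} = {0<..c}" using assms by auto
    then show ?thesis using Ioc by simp
  qed
  also have "measure lborel01 {0<..c} = c"
    using assms by (subst measure_lborel01) auto
  finally show ?thesis .
qed

text \<open>Compare the kinks at x and at c > x of the convex ramps, and let c decrease to x.\<close>
lemma sub_uniform_cdf_le_if_integral_ramp_ge: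
  assumes W: "sub_uniform W" and x: "0 \<le> x" "x < 1"
    and ge: "integral\<^sup>L lborel01 (ramp x) \<le> integral\<^sup>L W (ramp x)"
  shows "cdf W x \<le> x"
proof (rule dense_ge_bounded[OF x(2)])
  fix c assume c: "x < c" "c < 1"
  have "(c - x) * cdf W x \<le> integral\<^sup>L W (ramp c) - integral\<^sup>L W (ramp x)"
    using integral_ramp_add_cdf_le[OF sub_uniform_real_distribution[OF W]
        sub_uniform_ramp(1)[OF W] sub_uniform_ramp(1)[OF W] c(1)] by simp
  also have "\<dots> \<le> integral\<^sup>L lborel01 (ramp c) - integral\<^sup>L lborel01 (ramp x)"
    using sub_uniform_ramp(2)[OF W, of c] ge by simp
  also have "\<dots> \<le> (c - x) * c"
    using integral_ramp_lborel01_diff_le x c by simp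
  finally show "cdf W x \<le> c" using c by simp
qed

context cdf_distribution
begin

lemma le_cdf_iff_quantile_le: "\<omega> \<in> {0<..<1} \<Longrightarrow> \<omega> \<le> C x \<longleftrightarrow> I \<omega> \<le> x"
  using pseudoinverse[of \<omega> x] by auto

lemma measure_lessThan_le_if_le_quantile:
  assumes "\<omega> \<in> {0<..<1}" "t \<le> I \<omega>"
  shows "measure M {..<t} \<le> \<omega>"
proof -
  have below: "C x \<le> \<omega>" if "x < t" for x
    using that assms le_cdf_iff_quantile_le[OF assms(1), of x] by linarith
  have "\<forall>\<^sub>F x in at_left t. C x \<le> \<omega>"
    using eventually_at_left_real[of "t - 1" t] by (rule eventually_mono) (auto intro: below)
  then show ?thesis
    by (rule tendsto_upperbound[OF cdf_at_left _ trivial_limit_at_left_real])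
qed

lemma measurable_quantile_lborel01 [measurable]: "I \<in> borel_measurable lborel01"
  using measurable_CI by (subst measurable_cong_sets[OF sets_lborel01 refl])

text \<open>The jump of the cdf at the quantile of \<omega> spans the interval
  [jump_lo \<omega>, jump_hi \<omega>], which contains \<omega>.\<close>
definition jump_lo :: "real \<Rightarrow> real" where
  "jump_lo \<omega> = measure M {..< I \<omega>}"

definition jump_hi :: "real \<Rightarrow> real" where
  "jump_hi \<omega> = C (I \<omega>)"

lemma jump_lo_le: "\<omega> \<in> {0<..<1} \<Longrightarrow> jump_lo \<omega> \<le> \<omega>"
  unfolding jump_lo_def by (rule measure_lessThan_le_if_le_quantile) auto

lemma le_jump_hi: "\<omega> \<in> {0<..<1} \<Longrightarrow> \<omega> \<le> jump_hi \<omega>"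
  unfolding jump_hi_def using le_cdf_iff_quantile_le[of \<omega> "I \<omega>"] by simp

lemma jump_hi_le_jump_lo: "I \<omega>1 < I \<omega>2 \<Longrightarrow> jump_hi \<omega>1 \<le> jump_lo \<omega>2"
  unfolding jump_lo_def jump_hi_def cdf_def by (rule finite_measure_mono) auto

lemma jump_lo_nonneg: "0 \<le> jump_lo \<omega>"
  unfolding jump_lo_def by simp

lemma jump_hi_le_1: "jump_hi \<omega> \<le> 1"
  unfolding jump_hi_def by (rule cdf_bounded_prob)

lemma quantile_eq_if_in_jump:
  assumes "\<omega>' \<in> {0<..<1}" "jump_lo \<omega> < \<omega>'" "\<omega>' < jump_hi \<omega>"
  shows "I \<omega>' = I \<omega>"
proof -
  have "I \<omega>' \<le> I \<omega>"
    using le_cdf_iff_quantile_le[OF assms(1), of "I \<omega>"] assms(3) unfolding jump_hi_def by simp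
  moreover have "\<not> I \<omega>' < I \<omega>"
    using jump_hi_le_jump_lo[of \<omega>' \<omega>] le_jump_hi[OF assms(1)] assms(2) by linarith
  ultimately show ?thesis by simp
qed

lemma quantile_less_if_less_jump_lo:
  assumes "\<omega> \<in> {0<..<1}" "\<omega> < jump_lo s"
  shows "I \<omega> < I s"
  using measure_lessThan_le_if_le_quantile[OF assms(1), of "I s"] assms(2)
  unfolding jump_lo_def by linarith

lemma measurable_measure_lessThan [measurable]: "(\<lambda>t. measure M {..<t}) \<in> borel_measurable borel"
  by (rule borel_measurable_mono) (auto simp: mono_def intro!: finite_measure_mono)

lemma measurable_jump_lo [measurable]: "jump_lo \<in> borel_measurable lborel01"
  unfolding jump_lo_def by measurable

lemma measurable_jump_hi [measurable]: "jump_hi \<in> borel_measurable lborel01"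
  unfolding jump_hi_def by measurable

definition jump_reflect :: "real \<Rightarrow> real" where
  "jump_reflect \<omega> = jump_lo \<omega> + jump_hi \<omega> - \<omega>"

lemma measurable_jump_reflect [measurable]: "jump_reflect \<in> borel_measurable lborel01"
  unfolding jump_reflect_def by measurable

lemma jump_reflect_bounds:
  "\<omega> \<in> {0<..<1} \<Longrightarrow> jump_lo \<omega> \<le> jump_reflect \<omega>"
  "\<omega> \<in> {0<..<1} \<Longrightarrow> jump_reflect \<omega> \<le> jump_hi \<omega>"
  unfolding jump_reflect_def using jump_lo_le[of \<omega>] le_jump_hi[of \<omega>] by simp_all

text \<open>Such an \<omega> is fixed by the reflection and has jump_lo \<omega> = jump_hi s, and distinct
  jump intervals cannot share their lower end.\<close>
lemma jump_reflect_le_above_subsingleton: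
  assumes "\<omega>1 \<in> {0<..<1}" "I s < I \<omega>1" "jump_reflect \<omega>1 \<le> s"
    and "\<omega>2 \<in> {0<..<1}" "I s < I \<omega>2" "jump_reflect \<omega>2 \<le> s"
    and "s \<in> {0<..<1}"
  shows "\<omega>1 = \<omega>2"
proof -
  have fixed: "jump_hi \<omega> = \<omega> \<and> jump_lo \<omega> = jump_hi s \<and> jump_hi s < \<omega>"
    if "\<omega> \<in> {0<..<1}" "I s < I \<omega>" "jump_reflect \<omega> \<le> s" for \<omega>
  proof -
    have "jump_hi s \<le> jump_lo \<omega>" using jump_hi_le_jump_lo[OF that(2)] .
    with that jump_lo_le[of \<omega>] le_jump_hi[of \<omega>] le_jump_hi[OF assms(7)]
    have "jump_hi \<omega> = \<omega>" "jump_lo \<omega> = jump_hi s"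
      unfolding jump_reflect_def by linarith+
    moreover have "\<omega> \<noteq> jump_hi s"
      using le_cdf_iff_quantile_le[OF that(1), of "I s"] that(2) unfolding jump_hi_def by auto
    ultimately show ?thesis using jump_lo_le[OF that(1)] by linarith
  qed
  have "\<not> \<omega>1 < \<omega>2" if "\<omega>1 \<in> {0<..<1}" "I s < I \<omega>1" "jump_reflect \<omega>1 \<le> s"
    and "\<omega>2 \<in> {0<..<1}" "I s < I \<omega>2" "jump_reflect \<omega>2 \<le> s" for \<omega>1 \<omega>2
  proof
    assume lt: "\<omega>1 < \<omega>2"
    have "I \<omega>1 \<le> I \<omega>2" using mono_onD[OF mono_I] that lt by simp
    moreover have "I \<omega>1 \<noteq> I \<omega>2"
      using fixed[OF that(1-3)] fixed[OF that(4-6)] lt unfolding jump_hi_def by auto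
    ultimately have "jump_hi \<omega>1 \<le> jump_lo \<omega>2" using jump_hi_le_jump_lo by simp
    then show False using fixed[OF that(1-3)] fixed[OF that(4-6)] lt by simp
  qed
  from this[OF assms(1-6)] this[OF assms(4-6) assms(1-3)] show ?thesis by simp
qed

lemma jump_reflect_le_lower:
  assumes s: "0 < s" "s < 1"
  shows "ennreal s \<le> emeasure lborel {\<omega>\<in>{0<..<1}. jump_reflect \<omega> \<le> s}"
proof -
  let ?S = "{\<omega>\<in>{0<..<1}. jump_reflect \<omega> \<le> s}"
  define \<alpha> where "\<alpha> = jump_lo s"
  define \<beta> where "\<beta> = jump_hi s"
  have ab: "0 \<le> \<alpha>" "\<alpha> \<le> s" "s \<le> \<beta>"
    using jump_lo_nonneg jump_lo_le le_jump_hi s unfolding \<alpha>_def \<beta>_def by auto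
  have below: "{0<..<\<alpha>} \<subseteq> ?S"
  proof
    fix \<omega> assume \<omega>: "\<omega> \<in> {0<..<\<alpha>}"
    then have \<omega>01: "\<omega> \<in> {0<..<1}" using ab s by auto
    have "jump_hi \<omega> \<le> \<alpha>"
      using jump_hi_le_jump_lo[OF quantile_less_if_less_jump_lo[OF \<omega>01]] \<omega>
      unfolding \<alpha>_def by simp
    then show "\<omega> \<in> ?S" using jump_reflect_bounds(2)[OF \<omega>01] \<omega>01 ab by simp
  qed
  have reflected: "{\<alpha> + \<beta> - s<..<\<beta>} \<subseteq> ?S"
  proof
    fix \<omega> assume \<omega>: "\<omega> \<in> {\<alpha> + \<beta> - s<..<\<beta>}"
    then have \<omega>01: "\<omega> \<in> {0<..<1}" using ab s jump_hi_le_1[of s] unfolding \<beta>_def by auto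
    have "I \<omega> = I s"
      using quantile_eq_if_in_jump[OF \<omega>01, of s] \<omega> ab unfolding \<alpha>_def \<beta>_def by simp
    then have "jump_lo \<omega> = \<alpha>" "jump_hi \<omega> = \<beta>"
      unfolding \<alpha>_def \<beta>_def jump_lo_def jump_hi_def by simp_all
    then show "\<omega> \<in> ?S" using \<omega>01 \<omega> unfolding jump_reflect_def by simp
  qed
  have "ennreal s = emeasure lborel {0<..<\<alpha>} + emeasure lborel {\<alpha> + \<beta> - s<..<\<beta>}"
    using ab by (simp add: ennreal_plus[symmetric])
  also have "\<dots> = emeasure lborel ({0<..<\<alpha>} \<union> {\<alpha> + \<beta> - s<..<\<beta>})"
    by (rule plus_emeasure) (use ab in auto)
  also have "\<dots> \<le> emeasure lborel ?S"
    using below reflected Collect_le_in_sets_lborel[OF measurable_jump_reflect]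
    by (intro emeasure_mono) auto
  finally show ?thesis .
qed

lemma jump_reflect_le_subset:
  assumes s: "0 < s" "s < 1"
  obtains c where "{\<omega>\<in>{0<..<1}. jump_reflect \<omega> \<le> s}
    \<subseteq> {0..jump_lo s} \<union> {jump_lo s + jump_hi s - s..jump_hi s} \<union> {c}"
proof -
  define B where "B = {\<omega>\<in>{0<..<1}. I s < I \<omega> \<and> jump_reflect \<omega> \<le> s}"
  obtain c where "B \<subseteq> {c}"
  proof (cases "B = {}")
    case False
    then obtain c where "c \<in> B" by blast
    then have "B \<subseteq> {c}"
      using jump_reflect_le_above_subsingleton s unfolding B_def by auto
    then show ?thesis by (rule that)
  qed (use that in blast)
  have "\<omega> \<in> {0..jump_lo s} \<union> {jump_lo s + jump_hi s - s..jump_hi s} \<union> {c}"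
    if \<omega>01: "\<omega> \<in> {0<..<1}" and le: "jump_reflect \<omega> \<le> s" for \<omega>
  proof -
    consider "I \<omega> < I s" | "I \<omega> = I s" | "I s < I \<omega>" by linarith
    then show ?thesis
    proof cases
      case 1
      then have "jump_hi \<omega> \<le> jump_lo s" by (rule jump_hi_le_jump_lo)
      then show ?thesis using le_jump_hi[OF \<omega>01] \<omega>01 by auto
    next
      case 2
      then have "jump_lo \<omega> = jump_lo s" "jump_hi \<omega> = jump_hi s"
        unfolding jump_lo_def jump_hi_def by simp_all
      then show ?thesis using le le_jump_hi[OF \<omega>01] unfolding jump_reflect_def by auto
    next
      case 3
      then have "\<omega> \<in> B" unfolding B_def using \<omega>01 le by simp
      then show ?thesis using \<open>B \<subseteq> {c}\<close> by auto
    qed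
  qed
  then show ?thesis by (intro that[of c]) blast
qed

lemma jump_reflect_le_upper:
  assumes s: "0 < s" "s < 1"
  shows "emeasure lborel {\<omega>\<in>{0<..<1}. jump_reflect \<omega> \<le> s} \<le> ennreal s"
proof -
  define \<alpha> where "\<alpha> = jump_lo s"
  define \<beta> where "\<beta> = jump_hi s"
  have ab: "0 \<le> \<alpha>" "\<alpha> \<le> s" "s \<le> \<beta>"
    using jump_lo_nonneg jump_lo_le le_jump_hi s unfolding \<alpha>_def \<beta>_def by auto
  obtain c where "{\<omega>\<in>{0<..<1}. jump_reflect \<omega> \<le> s} \<subseteq> {0..\<alpha>} \<union> {\<alpha> + \<beta> - s..\<beta>} \<union> {c}"
    using jump_reflect_le_subset[OF s] unfolding \<alpha>_def \<beta>_def .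
  then have "emeasure lborel {\<omega>\<in>{0<..<1}. jump_reflect \<omega> \<le> s}
      \<le> emeasure lborel ({0..\<alpha>} \<union> {\<alpha> + \<beta> - s..\<beta>} \<union> {c})"
    by (rule emeasure_mono) simp
  also have "\<dots> \<le> emeasure lborel {0..\<alpha>} + emeasure lborel {\<alpha> + \<beta> - s..\<beta>}"
    using emeasure_subadditive[of "{0..\<alpha>} \<union> {\<alpha> + \<beta> - s..\<beta>}" lborel "{c}"]
      emeasure_subadditive[of "{0..\<alpha>}" lborel "{\<alpha> + \<beta> - s..\<beta>}"]
    by simp
  also have "\<dots> = ennreal s" using ab by (simp add: ennreal_plus[symmetric])
  finally show ?thesis .
qed

lemma measure_jump_reflect_le:
  "measure lborel {\<omega>\<in>{0<..<1}. jump_reflect \<omega> \<le> s} = measure lborel {\<omega>\<in>{0<..<1}. \<omega> \<le> s}"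
proof -
  let ?S = "\<lambda>s. {\<omega>\<in>{0<..<1}. jump_reflect \<omega> \<le> s}"
  have interior: "emeasure lborel (?S s) = ennreal s" if "0 < s" "s < 1" for s
    using jump_reflect_le_lower[OF that] jump_reflect_le_upper[OF that] by (rule antisym[rotated])
  consider "1 \<le> s" | "0 < s" "s < 1" | "s \<le> 0" by linarith
  then show ?thesis
  proof cases
    case 1
    have "jump_reflect \<omega> \<le> s" if "\<omega> \<in> {0<..<1}" for \<omega>
      using jump_reflect_bounds(2)[OF that] jump_hi_le_1[of \<omega>] 1 by linarith
    then have "?S s = {\<omega>\<in>{0<..<1}. \<omega> \<le> s}" using 1 by auto
    then show ?thesis by simp
  next
    case 2
    moreover have "{\<omega>\<in>{0<..<1}. \<omega> \<le> s} = {0<..s}" using 2 by auto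
    ultimately show ?thesis using interior[OF 2] by (simp add: measure_def)
  next
    case 3
    have "emeasure lborel (?S s) \<le> 0"
    proof (rule ennreal_le_epsilon)
      fix e :: real assume "0 < e"
      define s' where "s' = min e (1/2)"
      have s': "0 < s'" "s' < 1" "s' \<le> e" using \<open>0 < e\<close> unfolding s'_def by auto
      have "emeasure lborel (?S s) \<le> emeasure lborel (?S s')"
        using 3 s' Collect_le_in_sets_lborel[OF measurable_jump_reflect]
        by (intro emeasure_mono) auto
      also have "\<dots> \<le> 0 + ennreal e" using interior[OF s'(1,2)] s' by simp
      finally show "emeasure lborel (?S s) \<le> 0 + ennreal e" .
    qed
    moreover have "{\<omega>\<in>{0<..<1}. \<omega> \<le> s} = {}" using 3 by auto
    ultimately show ?thesis by (simp add: measure_def del: Collect_empty_eq)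
  qed
qed

lemma distr_jump_reflect: "distr lborel01 borel jump_reflect = distr lborel01 borel (\<lambda>x. x)"
proof (rule cdf_unique)
  show "cdf (distr lborel01 borel jump_reflect) = cdf (distr lborel01 borel (\<lambda>x. x))"
    by (rule ext) (simp only: cdf_distr_lborel01[OF measurable_jump_reflect]
        cdf_distr_lborel01[OF measurable_ident_lborel01] measure_jump_reflect_le)
qed (simp_all add: real_distribution_distr_lborel01)

lemma
  fixes g :: "real \<Rightarrow> real"
  assumes g: "g \<in> borel_measurable borel"
  shows integral_jump_reflect: "integral\<^sup>L lborel01 (\<lambda>\<omega>. g (jump_reflect \<omega>)) = integral\<^sup>L lborel01 g"
    and integrable_jump_reflect:
      "integrable lborel01 g \<Longrightarrow> integrable lborel01 (\<lambda>\<omega>. g (jump_reflect \<omega>))"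
proof -
  have "integral\<^sup>L lborel01 (\<lambda>\<omega>. g (jump_reflect \<omega>)) = integral\<^sup>L (distr lborel01 borel jump_reflect) g"
    by (rule integral_distr[symmetric]) (simp_all add: g)
  also have "\<dots> = integral\<^sup>L lborel01 g"
    by (subst distr_jump_reflect, subst integral_distr) (simp_all add: g)
  finally show "integral\<^sup>L lborel01 (\<lambda>\<omega>. g (jump_reflect \<omega>)) = integral\<^sup>L lborel01 g" .
  assume "integrable lborel01 g"
  then have "integrable (distr lborel01 borel jump_reflect) g"
    by (subst distr_jump_reflect, subst integrable_distr_eq) (simp_all add: g)
  then show "integrable lborel01 (\<lambda>\<omega>. g (jump_reflect \<omega>))"
    by (subst (asm) integrable_distr_eq) (simp_all add: g)
qed

definition jump_mid :: "real \<Rightarrow> real" where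
  "jump_mid \<omega> = (jump_lo \<omega> + jump_hi \<omega>) / 2"

abbreviation jump_mid_law :: "real measure" where
  "jump_mid_law \<equiv> distr lborel01 borel jump_mid"

lemma measurable_jump_mid [measurable]: "jump_mid \<in> borel_measurable lborel01"
  unfolding jump_mid_def by measurable

lemma jump_mid_eq_average: "jump_mid \<omega> = (\<omega> + jump_reflect \<omega>) / 2"
  unfolding jump_mid_def jump_reflect_def by simp

lemma jump_mid_bounds:
  "\<omega> \<in> {0<..<1} \<Longrightarrow> jump_lo \<omega> \<le> jump_mid \<omega>"
  "\<omega> \<in> {0<..<1} \<Longrightarrow> jump_mid \<omega> \<le> jump_hi \<omega>"
  using jump_lo_le[of \<omega>] le_jump_hi[of \<omega>] unfolding jump_mid_def by simp_all

lemma jump_mid_in_unit: "jump_mid \<omega> \<in> {0..1}"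
proof -
  have "jump_lo \<omega> \<le> 1" "0 \<le> jump_hi \<omega>"
    unfolding jump_lo_def jump_hi_def by (simp_all add: cdf_nonneg)
  then show ?thesis
    using jump_lo_nonneg[of \<omega>] jump_hi_le_1[of \<omega>] unfolding jump_mid_def by simp
qed

lemma real_distribution_jump_mid_law: "real_distribution jump_mid_law"
  by (rule real_distribution_distr_lborel01) simp

lemma
  fixes h :: "real \<Rightarrow> real"
  assumes h: "convex_on UNIV h"
  shows integrable_convex_jump_mid: "integrable lborel01 (\<lambda>\<omega>. h (jump_mid \<omega>))"
    and integral_convex_jump_mid_le:
      "integral\<^sup>L lborel01 (\<lambda>\<omega>. h (jump_mid \<omega>)) \<le> integral\<^sup>L lborel01 h"
proof -
  have hm: "h \<in> borel_measurable borel" by (rule convex_on_borel_measurable[OF h])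
  obtain B where B: "\<And>y. y \<in> {0..1} \<Longrightarrow> \<bar>h y\<bar> \<le> B"
    using convex_on_bounded_on_compact[OF h compact_Icc] by blast
  show int_mid: "integrable lborel01 (\<lambda>\<omega>. h (jump_mid \<omega>))"
    by (rule integrable_lborel01_bounded[where B=B])
      (simp_all add: hm measurable_compose[OF measurable_jump_mid] B[OF jump_mid_in_unit])
  have int_id: "integrable lborel01 h"
    by (rule integrable_lborel01_bounded[where B=B])
      (auto simp: B measurable_compose[OF measurable_ident_lborel01 hm])
  have int_refl: "integrable lborel01 (\<lambda>\<omega>. h (jump_reflect \<omega>))"
    by (rule integrable_jump_reflect[OF hm int_id])
  have "integral\<^sup>L lborel01 (\<lambda>\<omega>. h (jump_mid \<omega>))
      \<le> integral\<^sup>L lborel01 (\<lambda>\<omega>. h \<omega> / 2 + h (jump_reflect \<omega>) / 2)"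
  proof (rule integral_mono)
    fix \<omega> show "h (jump_mid \<omega>) \<le> h \<omega> / 2 + h (jump_reflect \<omega>) / 2"
      using convex_onD[OF h, of "1/2" \<omega> "jump_reflect \<omega>"] by (simp add: jump_mid_eq_average add_divide_distrib)
  qed (use int_mid int_id int_refl in simp_all)
  also have "\<dots> = integral\<^sup>L lborel01 h"
    using int_id int_refl by (simp add: integral_jump_reflect[OF hm])
  finally show "integral\<^sup>L lborel01 (\<lambda>\<omega>. h (jump_mid \<omega>)) \<le> integral\<^sup>L lborel01 h" .
qed

lemma sub_uniform_jump_mid_law: "sub_uniform jump_mid_law"
  unfolding sub_uniform_def
proof (intro conjI allI impI)
  show "prob_space jump_mid_law"
    using real_distribution_jump_mid_law by (simp add: real_distribution_def)
  fix h :: "real \<Rightarrow> real" assume h: "convex_on UNIV h"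
  have hm: "h \<in> borel_measurable borel" by (rule convex_on_borel_measurable[OF h])
  show "integrable jump_mid_law h"
    by (subst integrable_distr_eq) (simp_all add: hm integrable_convex_jump_mid[OF h])
  have "integral\<^sup>L jump_mid_law h = integral\<^sup>L lborel01 (\<lambda>\<omega>. h (jump_mid \<omega>))"
    by (rule integral_distr) (simp_all add: hm)
  also have "\<dots> \<le> integral\<^sup>L lborel01 h" by (rule integral_convex_jump_mid_le[OF h])
  also have "\<dots> = integral\<^sup>L unif01 h" by (rule integral_unif01[symmetric, OF hm])
  finally show "integral\<^sup>L jump_mid_law h \<le> integral\<^sup>L unif01 h" .
qed simp

lemma integral_ramp_jump_mid_law:
  "integrable jump_mid_law (ramp c)"
  "integral\<^sup>L jump_mid_law (ramp c) = integral\<^sup>L lborel01 (\<lambda>\<omega>. ramp c (jump_mid \<omega>))"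
  using integrable_convex_jump_mid[OF convex_on_ramp]
  by (simp_all add: integrable_distr_eq integral_distr)

text \<open>On each jump interval the ramp is affine unless its kink c lies strictly inside, and
  the reflection preserves the uniform law.\<close>
lemma integral_ramp_jump_mid_if_unstraddled:
  assumes "\<And>\<omega>. \<omega> \<in> {0<..<1} \<Longrightarrow> \<not> (jump_lo \<omega> < c \<and> c < jump_hi \<omega>)"
  shows "integral\<^sup>L lborel01 (\<lambda>\<omega>. ramp c (jump_mid \<omega>)) = integral\<^sup>L lborel01 (ramp c)"
proof -
  have int_refl: "integrable lborel01 (\<lambda>\<omega>. ramp c (jump_reflect \<omega>))"
    by (rule integrable_jump_reflect[OF _ integrable_lborel01_ramp]) simp
  have "integral\<^sup>L lborel01 (\<lambda>\<omega>. ramp c (jump_mid \<omega>))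
      = integral\<^sup>L lborel01 (\<lambda>\<omega>. ramp c \<omega> / 2 + ramp c (jump_reflect \<omega>) / 2)"
  proof (rule Bochner_Integration.integral_cong[OF refl])
    fix \<omega> assume "\<omega> \<in> space lborel01"
    then have \<omega>01: "\<omega> \<in> {0<..<1}" by simp
    have "c \<le> jump_lo \<omega> \<or> jump_hi \<omega> \<le> c" using assms[OF \<omega>01] by linarith
    moreover note jump_lo_le[OF \<omega>01] le_jump_hi[OF \<omega>01] jump_reflect_bounds[OF \<omega>01]
      jump_mid_eq_average[of \<omega>]
    ultimately show "ramp c (jump_mid \<omega>) = ramp c \<omega> / 2 + ramp c (jump_reflect \<omega>) / 2"
      by (auto simp: max_def field_simps)
  qed
  also have "\<dots> = integral\<^sup>L lborel01 (ramp c)"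
    using integrable_lborel01_ramp int_refl integral_jump_reflect[of "ramp c"] by simp
  finally show ?thesis .
qed

end

text \<open>Quantile coupling: the ramp is antitone, and the quantile of W lies below that of L
  wherever the latter is below x.\<close>
lemma integral_ramp_le_if_cdf_le_below:
  assumes L: "real_distribution L" and W: "real_distribution W"
    and le: "\<And>y. y < x \<Longrightarrow> cdf L y \<le> cdf W y"
    and int_L: "integrable L (ramp x)" and int_W: "integrable W (ramp x)"
  shows "integral\<^sup>L L (ramp x) \<le> integral\<^sup>L W (ramp x)"
proof -
  interpret L: cdf_distribution L using L by (simp add: cdf_distribution_def)
  interpret W: cdf_distribution W using W by (simp add: cdf_distribution_def)
  have "integral\<^sup>L L (ramp x) = integral\<^sup>L lborel01 (\<lambda>\<omega>. ramp x (L.I \<omega>))"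
    by (subst L.distr_I_eq_M[symmetric], rule integral_distr) simp_all
  also have "\<dots> \<le> integral\<^sup>L lborel01 (\<lambda>\<omega>. ramp x (W.I \<omega>))"
  proof (rule integral_mono)
    show "integrable lborel01 (\<lambda>\<omega>. ramp x (L.I \<omega>))"
      using int_L by (subst (asm) L.distr_I_eq_M[symmetric], subst (asm) integrable_distr_eq) simp_all
    show "integrable lborel01 (\<lambda>\<omega>. ramp x (W.I \<omega>))"
      using int_W by (subst (asm) W.distr_I_eq_M[symmetric], subst (asm) integrable_distr_eq) simp_all
    fix \<omega> assume "\<omega> \<in> space lborel01"
    then have \<omega>01: "\<omega> \<in> {0<..<1}" by simp
    show "ramp x (L.I \<omega>) \<le> ramp x (W.I \<omega>)"
    proof (cases "L.I \<omega> < x")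
      case True
      have "\<omega> \<le> cdf L (L.I \<omega>)" using L.le_cdf_iff_quantile_le[OF \<omega>01, of "L.I \<omega>"] by simp
      also have "\<dots> \<le> cdf W (L.I \<omega>)" using le[OF True] .
      finally have "W.I \<omega> \<le> L.I \<omega>" using W.le_cdf_iff_quantile_le[OF \<omega>01, of "L.I \<omega>"] by simp
      then show ?thesis by simp
    qed simp
  qed
  also have "\<dots> = integral\<^sup>L W (ramp x)"
    by (subst W.distr_I_eq_M[symmetric], rule integral_distr[symmetric]) simp_all
  finally show ?thesis .
qed

text \<open>Below x, the cdf of L can only increase at points of its support; take the smallest
  point z where it reaches its value at y.\<close>
lemma cdf_le_if_agree_on_support:
  assumes L: "real_distribution L" and W: "real_distribution W" and x: "x \<in> supp L"
    and agree: "\<forall>y\<in>supp L \<inter> {0..<x}. cdf W y = cdf L y"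
    and nonneg: "\<And>z. z < 0 \<Longrightarrow> cdf L z = 0" and "y < x"
  shows "cdf L y \<le> cdf W y"
proof -
  interpret L: cdf_distribution L using L by (simp add: cdf_distribution_def)
  interpret W: real_distribution W by (rule W)
  show ?thesis
  proof (cases "cdf L y = 0")
    case False
    let ?w = "cdf L y"
    have "0 < measure L {x - e<..<x + e}" if "0 < e" for e
      using x that unfolding supp_def by blast
    from this[of "x - y"] have "0 < measure L {y<..<x + (x - y)}" using \<open>y < x\<close> by simp
    also have "\<dots> \<le> measure L {y<..}" by (rule L.finite_measure_mono) auto
    also have "\<dots> = 1 - ?w"
    proof -
      have "UNIV - {..y} = {y<..}" by auto
      then show ?thesis using L.prob_compl[of "{..y}"] by (simp add: cdf_def)
    qed
    finally have w01: "?w \<in> {0<..<1}" using False L.cdf_nonneg[of y] by simp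
    define z where "z = L.I ?w"
    have z: "?w \<le> cdf L t \<longleftrightarrow> z \<le> t" for t
      unfolding z_def by (rule L.le_cdf_iff_quantile_le[OF w01])
    have "z \<le> y" using z[of y] by simp
    have cdf_z: "cdf L z = ?w"
      using z[of z] L.cdf_nondecreasing[OF \<open>z \<le> y\<close>] by simp
    have "0 \<le> z" using nonneg[of z] cdf_z False by linarith
    have "z \<in> supp L"
      unfolding supp_def
    proof (intro CollectI allI impI)
      fix e :: real assume "0 < e"
      have "0 < cdf L z - cdf L (z - e/2)" using z[of "z - e/2"] cdf_z \<open>0 < e\<close> by simp
      also have "\<dots> = measure L {z - e/2<..z}" by (rule L.cdf_diff_eq) (use \<open>0 < e\<close> in simp)
      also have "\<dots> \<le> measure L {z - e<..<z + e}"
        by (rule L.finite_measure_mono) (use \<open>0 < e\<close> in auto)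
      finally show "0 < measure L {z - e<..<z + e}" .
    qed
    with \<open>0 \<le> z\<close> \<open>z \<le> y\<close> \<open>y < x\<close> have "cdf W z = cdf L z" using agree by simp
    then have "cdf W z = ?w" using cdf_z by simp
    then show ?thesis using W.cdf_nondecreasing[OF \<open>z \<le> y\<close>] by simp
  qed (simp add: W.cdf_nonneg)
qed

context cdf_distribution
begin

lemma cdf_jump_mid_law: "cdf jump_mid_law y = measure lborel01 {\<omega>\<in>{0<..<1}. jump_mid \<omega> \<le> y}"
  unfolding cdf_def by (subst measure_distr) (auto intro!: arg_cong[where f="measure lborel01"])

lemma cdf_jump_mid_law_neg: "y < 0 \<Longrightarrow> cdf jump_mid_law y = 0"
proof -
  assume "y < 0"
  then have "{\<omega>\<in>{0<..<1}. jump_mid \<omega> \<le> y} = {}"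
    using jump_mid_in_unit by (auto simp: not_le intro: less_le_trans)
  then show ?thesis unfolding cdf_jump_mid_law by (simp only: measure_empty)
qed

lemma measure_jump_mid_law_Ioo_eq_0:
  assumes "\<And>\<omega>. \<omega> \<in> {0<..<1} \<Longrightarrow> \<not> (a < jump_mid \<omega> \<and> jump_mid \<omega> < b)"
  shows "measure jump_mid_law {a<..<b} = 0"
proof -
  have "measure jump_mid_law {a<..<b} = measure lborel01 (jump_mid -` {a<..<b} \<inter> space lborel01)"
    by (rule measure_distr) simp_all
  also have "jump_mid -` {a<..<b} \<inter> space lborel01 = {}" using assms by auto
  finally show ?thesis by simp
qed

lemma supp_jump_mid_law_nonneg: "x \<in> supp jump_mid_law \<Longrightarrow> 0 \<le> x"
proof (rule ccontr)
  assume x: "x \<in> supp jump_mid_law" and "\<not> 0 \<le> x"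
  have "0 < measure jump_mid_law {x - e<..<x + e}" if "0 < e" for e
    using x that unfolding supp_def by blast
  from this[of "- x"] \<open>\<not> 0 \<le> x\<close> have "0 < measure jump_mid_law {2 * x<..<0}" by simp
  moreover have "measure jump_mid_law {2 * x<..<0} = 0"
    using jump_mid_in_unit by (intro measure_jump_mid_law_Ioo_eq_0) (auto simp: not_less)
  ultimately show False by simp
qed

lemma le_cdf_jump_mid_law_if_unstraddled:
  assumes "0 \<le> x" "x < 1"
    and unstraddled: "\<And>\<omega>. \<omega> \<in> {0<..<1} \<Longrightarrow> \<not> (jump_lo \<omega> < x \<and> x < jump_hi \<omega>)"
  shows "x \<le> cdf jump_mid_law x"
proof -
  have "{0<..<x} \<subseteq> {\<omega>\<in>{0<..<1}. jump_mid \<omega> \<le> x}"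
  proof
    fix \<omega> assume \<omega>: "\<omega> \<in> {0<..<x}"
    then have \<omega>01: "\<omega> \<in> {0<..<1}" using assms by auto
    have "jump_hi \<omega> \<le> x" using unstraddled[OF \<omega>01] jump_lo_le[OF \<omega>01] \<omega> by auto
    then show "\<omega> \<in> {\<omega>\<in>{0<..<1}. jump_mid \<omega> \<le> x}" using jump_mid_bounds(2)[OF \<omega>01] \<omega>01 by simp
  qed
  then have "measure lborel01 {0<..<x} \<le> measure lborel01 {\<omega>\<in>{0<..<1}. jump_mid \<omega> \<le> x}"
    by (rule finite_measure.finite_measure_mono[OF prob_space.finite_measure[OF prob_space_lborel01]])
      (rule Collect_le_in_sets_lborel01, simp)
  moreover have "measure lborel01 {0<..<x} = x" using assms by (subst measure_lborel01) auto
  ultimately show ?thesis by (simp add: cdf_jump_mid_law)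
qed

lemma jump_mid_trichotomy:
  assumes "\<omega> \<in> {0<..<1}"
  shows "jump_mid \<omega> \<le> jump_lo \<omega>0 \<or> jump_mid \<omega> = jump_mid \<omega>0 \<or> jump_hi \<omega>0 \<le> jump_mid \<omega>"
proof -
  consider "I \<omega> < I \<omega>0" | "I \<omega> = I \<omega>0" | "I \<omega>0 < I \<omega>" by linarith
  then show ?thesis
  proof cases
    case 1
    then show ?thesis using jump_hi_le_jump_lo jump_mid_bounds(2)[OF assms] by force
  next
    case 2
    then show ?thesis unfolding jump_mid_def jump_lo_def jump_hi_def by simp
  next
    case 3
    then show ?thesis using jump_hi_le_jump_lo jump_mid_bounds(1)[OF assms] by force
  qed
qed

lemma supp_in_jump_eq_jump_mid:
  assumes x: "x \<in> supp jump_mid_law" and "jump_lo \<omega>0 < x" "x < jump_hi \<omega>0"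
  shows "x = jump_mid \<omega>0"
proof (rule ccontr)
  let ?m = "jump_mid \<omega>0"
  assume "x \<noteq> ?m"
  define e where "e = min (min (x - jump_lo \<omega>0) (jump_hi \<omega>0 - x)) \<bar>x - ?m\<bar>"
  have "0 < e" using \<open>x \<noteq> ?m\<close> assms unfolding e_def by auto
  have "measure jump_mid_law {x - e<..<x + e} = 0"
  proof (rule measure_jump_mid_law_Ioo_eq_0)
    fix \<omega> :: real assume "\<omega> \<in> {0<..<1}"
    from jump_mid_trichotomy[OF this, of \<omega>0]
    show "\<not> (x - e < jump_mid \<omega> \<and> jump_mid \<omega> < x + e)"
      unfolding e_def by auto
  qed
  with x \<open>0 < e\<close> show False unfolding supp_def by auto
qed

text \<open>At the midpoint x of a jump interval [\<alpha>, \<beta>], the law of jump_mid has no mass in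
  (x, \<beta>), so the convex dominance at the kink \<beta> bounds the cdf at x.\<close>
lemma cdf_le_cdf_jump_mid_law_at_jump_mid:
  assumes W: "sub_uniform W" and x: "x = jump_mid \<omega>0" "jump_lo \<omega>0 < x" "x < jump_hi \<omega>0"
    and ramp_le: "integral\<^sup>L jump_mid_law (ramp x) \<le> integral\<^sup>L W (ramp x)"
  shows "cdf W x \<le> cdf jump_mid_law x"
proof -
  let ?\<beta> = "jump_hi \<omega>0"
  have unstraddled: "\<not> (jump_lo \<omega> < ?\<beta> \<and> ?\<beta> < jump_hi \<omega>)" if "\<omega> \<in> {0<..<1}" for \<omega>
    using jump_hi_le_jump_lo[of \<omega> \<omega>0] jump_hi_le_jump_lo[of \<omega>0 \<omega>] jump_lo_le[of \<omega>0]
      x(2,3) unfolding jump_hi_def[of \<omega>] jump_hi_def[of \<omega>0]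
    by (cases "I \<omega>" "I \<omega>0" rule: linorder_cases) auto
  have ind_int: "integrable lborel01 (\<lambda>\<omega>. indicator {..x} (jump_mid \<omega>) :: real)"
    by (rule integrable_lborel01_bounded[where B=1]) (auto simp: indicator_def)
  have ind_eq: "integral\<^sup>L lborel01 (\<lambda>\<omega>. indicator {..x} (jump_mid \<omega>) :: real) = cdf jump_mid_law x"
  proof -
    have "integral\<^sup>L lborel01 (\<lambda>\<omega>. indicator {..x} (jump_mid \<omega>) :: real)
        = integral\<^sup>L jump_mid_law (indicator {..x})"
      by (rule integral_distr[symmetric]) simp_all
    then show ?thesis by (simp add: cdf_def)
  qed
  have "integral\<^sup>L lborel01 (ramp ?\<beta>) = integral\<^sup>L lborel01 (\<lambda>\<omega>. ramp ?\<beta> (jump_mid \<omega>))"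
    by (rule integral_ramp_jump_mid_if_unstraddled[OF unstraddled, symmetric])
  also have "\<dots> = integral\<^sup>L lborel01
      (\<lambda>\<omega>. ramp x (jump_mid \<omega>) + (?\<beta> - x) * indicator {..x} (jump_mid \<omega>))"
  proof (rule Bochner_Integration.integral_cong[OF refl])
    fix \<omega> assume "\<omega> \<in> space lborel01"
    then show "ramp ?\<beta> (jump_mid \<omega>) = ramp x (jump_mid \<omega>) + (?\<beta> - x) * indicator {..x} (jump_mid \<omega>)"
      using jump_mid_trichotomy[of \<omega> \<omega>0] x by (auto simp: indicator_def max_def)
  qed
  also have "\<dots> = integral\<^sup>L jump_mid_law (ramp x) + (?\<beta> - x) * cdf jump_mid_law x"
    using integrable_convex_jump_mid[OF convex_on_ramp, of x] integral_ramp_jump_mid_law(2)[of x]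
      ind_int ind_eq by simp
  finally have uniform: "integral\<^sup>L lborel01 (ramp ?\<beta>)
      = integral\<^sup>L jump_mid_law (ramp x) + (?\<beta> - x) * cdf jump_mid_law x" .
  have "integral\<^sup>L W (ramp x) + (?\<beta> - x) * cdf W x \<le> integral\<^sup>L W (ramp ?\<beta>)"
    using sub_uniform_real_distribution[OF W] sub_uniform_ramp(1)[OF W] sub_uniform_ramp(1)[OF W] x(3)
    by (rule integral_ramp_add_cdf_le)
  also have "\<dots> \<le> integral\<^sup>L lborel01 (ramp ?\<beta>)" by (rule sub_uniform_ramp(2)[OF W])
  finally have "(?\<beta> - x) * cdf W x \<le> (?\<beta> - x) * cdf jump_mid_law x"
    using uniform ramp_le by simp
  then show ?thesis using x(3) by simp
qed

lemma cdf_le_cdf_jump_mid_law: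
  assumes W: "sub_uniform W" and x: "x \<in> supp jump_mid_law"
    and agree: "\<forall>y\<in>supp jump_mid_law \<inter> {0..<x}. cdf W y = cdf jump_mid_law y"
  shows "cdf W x \<le> cdf jump_mid_law x"
proof -
  have RW: "real_distribution W" by (rule sub_uniform_real_distribution[OF W])
  have "cdf jump_mid_law y \<le> cdf W y" if "y < x" for y
    using real_distribution_jump_mid_law RW x agree cdf_jump_mid_law_neg that
    by (rule cdf_le_if_agree_on_support)
  then have ramp_le: "integral\<^sup>L jump_mid_law (ramp x) \<le> integral\<^sup>L W (ramp x)"
    using real_distribution_jump_mid_law RW integral_ramp_jump_mid_law(1) sub_uniform_ramp(1)[OF W]
    by (intro integral_ramp_le_if_cdf_le_below)
  have "0 \<le> x" by (rule supp_jump_mid_law_nonneg[OF x])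
  consider "1 \<le> x" | "x < 1" "\<And>\<omega>. \<omega> \<in> {0<..<1} \<Longrightarrow> \<not> (jump_lo \<omega> < x \<and> x < jump_hi \<omega>)"
    | \<omega>0 where "jump_lo \<omega>0 < x" "x < jump_hi \<omega>0" by force
  then show ?thesis
  proof cases
    case 1
    then have "{\<omega>\<in>{0<..<1}. jump_mid \<omega> \<le> x} = {0<..<1}"
      using jump_mid_in_unit by (auto intro: order_trans)
    then have "cdf jump_mid_law x = 1" unfolding cdf_jump_mid_law by (simp add: measure_lborel01)
    then show ?thesis using real_distribution.cdf_bounded_prob[OF RW] by simp
  next
    case 2
    have "integral\<^sup>L lborel01 (ramp x) \<le> integral\<^sup>L W (ramp x)"
      using ramp_le integral_ramp_jump_mid_law(2)[of x]
        integral_ramp_jump_mid_if_unstraddled[OF 2(2)] by simp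
    then have "cdf W x \<le> x" by (rule sub_uniform_cdf_le_if_integral_ramp_ge[OF W \<open>0 \<le> x\<close> 2(1)])
    also have "x \<le> cdf jump_mid_law x" by (rule le_cdf_jump_mid_law_if_unstraddled[OF \<open>0 \<le> x\<close> 2])
    finally show ?thesis .
  next
    case 3
    with x have "x = jump_mid \<omega>0" by (rule supp_in_jump_eq_jump_mid)
    with W 3 ramp_le show ?thesis by (intro cdf_le_cdf_jump_mid_law_at_jump_mid)
  qed
qed

lemma jump_mid_law_eq_distr_mid_cdf:
  "jump_mid_law = distr M borel (\<lambda>s. (measure M {..<s} + C s) / 2)"
proof -
  have mid: "(\<lambda>s. (measure M {..<s} + C s) / 2) \<in> borel_measurable borel"
    by measurable
  have "jump_mid = (\<lambda>s. (measure M {..<s} + C s) / 2) \<circ> I"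
    by (rule ext) (simp add: jump_mid_def jump_lo_def jump_hi_def)
  then show ?thesis
    by (simp add: distr_distr[OF mid measurable_quantile_lborel01, symmetric] distr_I_eq_M)
qed

lemma cdf_jump_mid_law_eq_Sup:
  assumes "x \<in> supp jump_mid_law"
  shows "cdf jump_mid_law x = Sup {cdf W x | W. sub_uniform W \<and>
      (\<forall>y \<in> supp jump_mid_law \<inter> {0..<x}. cdf W y = cdf jump_mid_law y)}"
  using sub_uniform_jump_mid_law cdf_le_cdf_jump_mid_law[OF _ assms]
  by (intro cSup_eq_maximum[symmetric]) blast+

end

lemma cdf_distribution_distr_uminus:
  assumes "prob_space P0" "sets P0 = sets borel"
  shows "cdf_distribution (distr P0 borel uminus)"
proof -
  interpret prob_space P0 by (rule assms(1))
  have "(uminus :: real \<Rightarrow> real) \<in> measurable P0 borel"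
    by (subst measurable_cong_sets[OF assms(2) refl]) simp
  then show ?thesis unfolding cdf_distribution_def by (rule real_distribution_distr)
qed

text \<open>The mid-p-value of T is the mid-distribution function of -T evaluated at -T.\<close>
lemma distr_midp_eq_jump_mid_law:
  assumes "prob_space P0" "sets P0 = sets borel"
  shows "distr P0 borel (midp P0)
    = distr lborel01 borel (cdf_distribution.jump_mid (distr P0 borel uminus))"
proof -
  define P where "P = distr P0 borel (uminus :: real \<Rightarrow> real)"
  interpret P: cdf_distribution P
    unfolding P_def using assms by (rule cdf_distribution_distr_uminus)
  define mid where "mid s = (measure P {..<s} + cdf P s) / 2" for s
  have uminus: "(uminus :: real \<Rightarrow> real) \<in> measurable P0 borel"
    by (subst measurable_cong_sets[OF assms(2) refl]) simp
  have mid_meas: "mid \<in> borel_measurable borel"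
    unfolding mid_def using P.measurable_measure_lessThan by measurable
  have "space P0 = UNIV" using sets_eq_imp_space_eq[OF assms(2)] by simp
  then have "uminus -` A \<inter> space P0 = uminus ` A" for A :: "real set"
    by (auto simp: image_iff) (metis minus_minus)
  then have "measure P A = measure P0 (uminus ` A)" if "A \<in> sets borel" for A
    unfolding P_def using that by (simp add: measure_distr[OF uminus])
  then have "midp P0 t = mid (- t)" for t
    unfolding midp_def mid_def cdf_def by (simp add: image_uminus_lessThan image_uminus_atMost)
  then have "midp P0 = mid \<circ> uminus" by auto
  then have "distr P0 borel (midp P0) = distr P borel mid"
    unfolding P_def by (simp add: distr_distr[OF mid_meas uminus])
  also have "\<dots> = P.jump_mid_law"
    unfolding P.jump_mid_law_eq_distr_mid_cdf mid_def ..
  finally show ?thesis unfolding P_def .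
qed

theorem lemma1:
  fixes P0 :: "real measure" and x :: real
  assumes "prob_space P0" and "sets P0 = sets borel"
    and "x \<in> supp (distr P0 borel (midp P0))"
  shows "cdf (distr P0 borel (midp P0)) x =
    Sup {cdf W x | W. sub_uniform W \<and>
      (\<forall>y \<in> supp (distr P0 borel (midp P0)) \<inter> {0..<x}.
          cdf W y = cdf (distr P0 borel (midp P0)) y)}"
proof -
  interpret P: cdf_distribution "distr P0 borel uminus"
    using assms(1,2) by (rule cdf_distribution_distr_uminus)
  show ?thesis
    using assms(3) P.cdf_jump_mid_law_eq_Sup
    unfolding distr_midp_eq_jump_mid_law[OF assms(1,2)] by blast
qed

end
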